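(* Let $T$ be a caterpillar shuffle tree monomial in the free 2-colored shuffle operad generated by the elements $\gamma_{i,\bar c}$ described below, and fix any admissible coloring of its inputs and output. Then the poset $([T]_{\mathfrak c},\prec)$ of all colored shuffle monomials of the given shape possesses a unique supremum $T^{\max}$, and $T^{\max}$ is characterized by having the maximal possible number of internal edges colored straight.
   Context: Colors are called "straight" (encoded $0$) and "dotted" (encoded $1$). Let $\{\gamma_i\}_{i\in I}$ be a set of shuffle generators (a basis of the generating collection) of a free cyclic operad, $\gamma_i$ of arity $m_i$ (i.e. $m_i+1$ legs). The associated 2-colored shuffle generators are $\gamma_{i,\bar c}$ for $\bar c=(c_0;c_1,\dots,c_{m_i})\in\mathbb F_2^{m_i+1}\setminus\{(0;1,\dots,1),(1;0,\dots,0)\}$, where $c_0$ is the color of the output and $c_j$ the color of the $j$-th input; i.e. a vertex may not have all inputs of one color and the output of the other color (admissibility). For a colored shuffle tree monomial $T$ in these generators, $\mathrm{Shape}(T)$ is the underlying shuffle monomial obtained by forgetting the colors of internal edges (keeping the colors of inputs and output), and $[T]_{\mathfrak c}$ is the set of all colored shuffle monomials $T'$ with $\mathrm{Shape}(T')=\mathrm{Shape}(T)$. The partial order $\prec$ on $[T]_{\mathfrak c}$ is generated by the covering relations $T'\prec T''$ whenever $T''$ is obtained from $T'$ by recoloring a single dotted internal edge as straight. An operadic tree is a caterpillar tree if no vertex has more than one incoming internal edge (so the internal vertices form a path and all leaves attach to it); a shuffle tree monomial is caterpillar if its underlying tree is. *)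

theory Defs
  imports Main
begin

text \<open>Colors: straight (encoded 0) and dotted (encoded 1).\<close>
datatype color = Straight | Dotted

text \<open>Admissibility of a 2-colored vertex: the colored generator
  gamma_{i,c} exists iff c is not (0;1,...,1) and not (1;0,...,0), i.e. the vertex
  does not have all inputs of one color and the output of the other color.\<close>
definition admissible_vertex :: "color \<Rightarrow> color list \<Rightarrow> bool" where
  "admissible_vertex o_c ins \<longleftrightarrow>
     \<not> (o_c = Straight \<and> (\<forall>c\<in>set ins. c = Dotted)) \<and>
     \<not> (o_c = Dotted \<and> (\<forall>c\<in>set ins. c = Straight))"

text \<open>A caterpillar shape with n internal vertices v_0 (root), ..., v_{n-1}
  forming a path; internal edge j (for j < n-1) is the output of v_{j+1}
  plugged into an input of v_j.  The leaves of vertex j carry the fixed colors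
  leaves j, the root output carries the fixed color out.  A colored monomial of
  this shape is given by the colors of the n-1 internal edges, as a list col.\<close>
definition vertex_out :: "color \<Rightarrow> color list \<Rightarrow> nat \<Rightarrow> color" where
  "vertex_out out col j = (if j = 0 then out else col ! (j - 1))"

definition vertex_ins :: "nat \<Rightarrow> (nat \<Rightarrow> color list) \<Rightarrow> color list \<Rightarrow> nat \<Rightarrow> color list" where
  "vertex_ins n leaves col j = leaves j @ (if Suc j < n then [col ! j] else [])"

definition colorings :: "nat \<Rightarrow> (nat \<Rightarrow> color list) \<Rightarrow> color \<Rightarrow> color list set" where
  "colorings n leaves out =
     {col. length col = n - 1 \<and>
           (\<forall>j<n. admissible_vertex (vertex_out out col j) (vertex_ins n leaves col j))}"

definition recolor_step :: "color list \<Rightarrow> color list \<Rightarrow> bool" where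
  "recolor_step c c' \<longleftrightarrow> (\<exists>i<length c. c ! i = Dotted \<and> c' = c[i := Straight])"

definition prec_le :: "color list set \<Rightarrow> (color list \<times> color list) set" where
  "prec_le S = {(a, b). a \<in> S \<and> b \<in> S \<and> recolor_step a b}\<^sup>*"

definition num_straight :: "color list \<Rightarrow> nat" where
  "num_straight col = length (filter (\<lambda>c. c = Straight) col)"

definition is_greatest_in :: "color list set \<Rightarrow> color list \<Rightarrow> bool" where
  "is_greatest_in S t \<longleftrightarrow> t \<in> S \<and> (\<forall>t'\<in>S. (t', t) \<in> prec_le S)"

end

theory Submission
  imports Defs
begin

text \<open>Order the colors by \<open>Dotted < Straight\<close>. A vertex is admissible iff its output color
  occurs among its input colors; with only two colors this makes the admissible colorings closed
  under the pointwise maximum, so the coloring with the most straight edges lies pointwise above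
  all others. It remains to see that \<open>\<prec>\<close> is the pointwise order. If \<open>a < b\<close> pointwise,
  try to recolor an edge \<open>i\<close> that is dotted in \<open>a\<close> and straight in \<open>b\<close>. This can only break
  vertex \<open>i\<close> (then edge \<open>i - 1\<close> is also dotted in \<open>a\<close> and straight in \<open>b\<close>, and all leaves of
  vertex \<open>i\<close> are straight) or vertex \<open>i + 1\<close> (then the same holds for edge \<open>i + 1\<close>, and all
  leaves of vertex \<open>i + 1\<close> are dotted). Starting from the largest such \<open>i\<close>, and since every
  vertex has a leaf, failures can only propagate towards the root, whose output color is fixed.\<close>

instantiation color :: linorder
begin

definition less_eq_color :: "color \<Rightarrow> color \<Rightarrow> bool" where
  "x \<le> y \<longleftrightarrow> (x = Straight \<longrightarrow> y = Straight)"

definition less_color :: "color \<Rightarrow> color \<Rightarrow> bool" where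
  "x < y \<longleftrightarrow> x = Dotted \<and> y = Straight"

instance
  by standard (auto simp: less_eq_color_def less_color_def intro: color.exhaust)

end

lemma less_eq_color_iff: "x \<le> y \<longleftrightarrow> x = Dotted \<or> y = Straight"
  by (cases x) (auto simp: less_eq_color_def)

lemma le_Straight [simp]: "x \<le> Straight"
  by (simp add: less_eq_color_iff)

lemma admissible_vertex_iff_mem: "admissible_vertex c ins \<longleftrightarrow> c \<in> set ins"
  unfolding admissible_vertex_def by (cases c) (auto, (metis color.exhaust)+)

lemma mem_colorings_iff:
  "col \<in> colorings n leaves out \<longleftrightarrow> length col = n - 1 \<and>
     (\<forall>j<n. vertex_out out col j \<in> set (vertex_ins n leaves col j))"
  by (simp add: colorings_def admissible_vertex_iff_mem)

lemma max_color_mem_snoc: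
  fixes x y u v :: color
  assumes "x \<in> set (L @ [u])" and "y \<in> set (L @ [v])"
  shows "max x y \<in> set (L @ [max u v])"
  using assms unfolding set_append
  by (cases x; cases y; cases u; cases v) (auto simp: max_def less_eq_color_iff)

lemma map2_max_mem_colorings:
  assumes a: "a \<in> colorings n leaves out" and b: "b \<in> colorings n leaves out"
  shows "map2 max a b \<in> colorings n leaves out"
  unfolding mem_colorings_iff
proof (intro conjI allI impI)
  have len: "length a = n - 1" "length b = n - 1"
    using a b by (auto simp: mem_colorings_iff)
  then show "length (map2 max a b) = n - 1" by simp
  fix j assume j: "j < n"
  have xa: "vertex_out out a j \<in> set (vertex_ins n leaves a j)"
    and xb: "vertex_out out b j \<in> set (vertex_ins n leaves b j)"
    using a b j by (auto simp: mem_colorings_iff)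
  have "vertex_out out (map2 max a b) j = max (vertex_out out a j) (vertex_out out b j)"
    using j len by (simp add: vertex_out_def)
  moreover have "max (vertex_out out a j) (vertex_out out b j)
      \<in> set (vertex_ins n leaves (map2 max a b) j)"
  proof (cases "Suc j < n")
    case True
    then have "vertex_out out a j \<in> set (leaves j @ [a ! j])"
      and "vertex_out out b j \<in> set (leaves j @ [b ! j])"
      using xa xb by (simp_all add: vertex_ins_def)
    then show ?thesis
      using max_color_mem_snoc True len by (simp add: vertex_ins_def)
  next
    case False
    then show ?thesis using xa xb by (simp add: vertex_ins_def max_def)
  qed
  ultimately show "vertex_out out (map2 max a b) j \<in> set (vertex_ins n leaves (map2 max a b) j)"
    by simp
qed

lemma num_straight_Cons:
  "num_straight (x # xs) = (if x = Straight then 1 else 0) + num_straight xs"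
  by (simp add: num_straight_def)

lemma num_straight_le_length: "num_straight col \<le> length col"
  by (simp add: num_straight_def)

lemma num_straight_mono: "list_all2 (\<le>) a b \<Longrightarrow> num_straight a \<le> num_straight b"
  by (induction rule: list_all2_induct) (auto simp: num_straight_Cons less_eq_color_iff)

lemma num_straight_strict_mono:
  "list_all2 (\<le>) a b \<Longrightarrow> a \<noteq> b \<Longrightarrow> num_straight a < num_straight b"
proof (induction rule: list_all2_induct)
  case (Cons x xs y ys)
  then show ?case
    using num_straight_mono[OF Cons(2)]
    by (cases x; cases y) (auto simp: num_straight_Cons less_eq_color_iff)
qed simp

lemma list_all2_le_antisym: "list_all2 (\<le>) a b \<Longrightarrow> list_all2 (\<le>) b a \<Longrightarrow> a = b"
  for a b :: "'a::order list"
  by (rule list_all2_antisym) auto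

lemma list_all2_le_map2_max:
  fixes a b :: "'a::linorder list"
  assumes "length a = length b"
  shows "list_all2 (\<le>) a (map2 max a b)" and "list_all2 (\<le>) b (map2 max a b)"
  using assms by (simp_all add: list_all2_conv_all_nth)

lemma recolor_step_imp_le: "recolor_step a b \<Longrightarrow> list_all2 (\<le>) a b"
  unfolding recolor_step_def list_all2_conv_all_nth
  by (auto simp: nth_list_update)

lemma prec_le_imp_le: "(a, b) \<in> prec_le S \<Longrightarrow> list_all2 (\<le>) a b"
  unfolding prec_le_def
proof (induction rule: rtrancl_induct)
  case base
  show ?case by (simp add: list_all2_refl)
next
  case (step b c)
  then show ?case
    using recolor_step_imp_le list_all2_trans[of "(\<le>)" "(\<le>)" "(\<le>)"] order_trans by blast
qed

lemma recolor_blocked: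
  assumes a: "a \<in> colorings n leaves out" and b: "b \<in> colorings n leaves out"
    and i: "i < length a" "a ! i < b ! i"
    and blocked: "a[i := Straight] \<notin> colorings n leaves out"
  shows "(Suc i < length a \<and> a ! Suc i < b ! Suc i \<and> Straight \<notin> set (leaves (Suc i)))
       \<or> (0 < i \<and> a ! (i - 1) < b ! (i - 1) \<and> Dotted \<notin> set (leaves i))"
proof -
  let ?c = "a[i := Straight]"
  have len: "length a = n - 1" "length b = n - 1"
    using a b by (auto simp: mem_colorings_iff)
  have adm_a: "\<And>j. j < n \<Longrightarrow> vertex_out out a j \<in> set (vertex_ins n leaves a j)"
    and adm_b: "\<And>j. j < n \<Longrightarrow> vertex_out out b j \<in> set (vertex_ins n leaves b j)"
    using a b by (auto simp: mem_colorings_iff)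
  have colors: "a ! i = Dotted" "b ! i = Straight"
    using i(2) by (auto simp: less_color_def)
  obtain j where j: "j < n" and bad: "vertex_out out ?c j \<notin> set (vertex_ins n leaves ?c j)"
    using blocked len by (auto simp: mem_colorings_iff)
  consider "j = i" | "j = Suc i" | "j \<noteq> i" "j \<noteq> Suc i" by blast
  then show ?thesis
  proof cases
    case 1
    have ins: "vertex_ins n leaves ?c j = leaves i @ [Straight]"
              "vertex_ins n leaves b j = leaves i @ [Straight]"
      using 1 i len colors by (simp_all add: vertex_ins_def)
    have "vertex_out out ?c j = vertex_out out a j"
      using 1 by (simp add: vertex_out_def)
    then have out_a: "vertex_out out a j = Dotted" and no_dotted: "Dotted \<notin> set (leaves i)"
      using bad ins by (cases "vertex_out out a j"; auto)+
    have "vertex_out out b j \<in> set (leaves i) \<union> {Straight}"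
      using adm_b[OF j] ins(2) by simp
    then have "vertex_out out b j = Straight"
      using no_dotted by (metis Un_iff color.exhaust singletonD)
    then show ?thesis
      using 1 out_a no_dotted by (auto simp: vertex_out_def less_color_def split: if_splits)
  next
    case 2
    have "vertex_out out ?c j = Straight" "vertex_out out b j = Straight"
      using 2 i colors by (simp_all add: vertex_out_def)
    moreover have "vertex_ins n leaves ?c j = vertex_ins n leaves a j"
      using 2 by (simp add: vertex_ins_def)
    ultimately have "Straight \<notin> set (vertex_ins n leaves a j)"
      and "Straight \<in> set (vertex_ins n leaves b j)"
      using bad adm_b[OF j] by auto
    then show ?thesis
      using 2 len by (cases "a ! Suc i"; auto simp: vertex_ins_def less_color_def split: if_splits)
  next
    case 3
    have "vertex_out out ?c j = vertex_out out a j"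
      using 3 by (simp add: vertex_out_def)
    moreover have "vertex_ins n leaves ?c j = vertex_ins n leaves a j"
      using 3 by (simp add: vertex_ins_def)
    ultimately show ?thesis using adm_a[OF j] bad by simp
  qed
qed

lemma exists_recolor_below:
  assumes a: "a \<in> colorings n leaves out" and b: "b \<in> colorings n leaves out"
    and leaves: "\<forall>j<n. leaves j \<noteq> []"
    and le: "list_all2 (\<le>) a b" and neq: "a \<noteq> b"
  shows "\<exists>i<length a. a ! i < b ! i \<and> a[i := Straight] \<in> colorings n leaves out"
proof -
  define P where "P i \<longleftrightarrow> i < length a \<and> a ! i < b ! i" for i
  have len: "length a = n - 1"
    using a by (simp add: mem_colorings_iff)
  have descend: "\<exists>i. P i \<and> a[i := Straight] \<in> colorings n leaves out"
    if "P k" and "\<not> (P (Suc k) \<and> Straight \<notin> set (leaves (Suc k)))" for k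
    using that
  proof (induction k)
    case 0
    then show ?case using recolor_blocked[OF a b, of 0] unfolding P_def by auto
  next
    case (Suc k)
    show ?case
    proof (cases "a[Suc k := Straight] \<in> colorings n leaves out")
      case False
      then have "P k" and no_dotted: "Dotted \<notin> set (leaves (Suc k))"
        using recolor_blocked[OF a b, of "Suc k"] Suc.prems unfolding P_def by auto
      have "leaves (Suc k) \<noteq> []"
        using leaves Suc.prems(1) len unfolding P_def by auto
      then have "Straight \<in> set (leaves (Suc k))"
        using no_dotted by (metis color.exhaust last_in_set)
      then show ?thesis using Suc.IH \<open>P k\<close> by blast
    qed (use Suc.prems in blast)
  qed
  have "\<exists>i. P i"
  proof (rule ccontr)
    assume "\<nexists>i. P i"
    then have "list_all2 (\<le>) b a"
      using le unfolding P_def list_all2_conv_all_nth by (metis not_less)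
    then show False using list_all2_le_antisym le neq by blast
  qed
  then obtain k where "P k" and "\<forall>i. P i \<longrightarrow> i \<le> k"
    using ex_has_greatest_nat[of P _ "\<lambda>i. i" "length a"] unfolding P_def by blast
  then have "\<not> P (Suc k)" by fastforce
  then show ?thesis using descend[OF \<open>P k\<close>] unfolding P_def by blast
qed

lemma le_imp_prec_le:
  assumes b: "b \<in> colorings n leaves out" and leaves: "\<forall>j<n. leaves j \<noteq> []"
  shows "a \<in> colorings n leaves out \<Longrightarrow> list_all2 (\<le>) a b
    \<Longrightarrow> (a, b) \<in> prec_le (colorings n leaves out)"
proof (induction "num_straight b - num_straight a" arbitrary: a rule: less_induct)
  case less
  show ?case
  proof (cases "a = b")
    case True
    then show ?thesis by (simp add: prec_le_def)
  next
    case False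
    obtain i where i: "i < length a" "a ! i < b ! i"
      and c: "a[i := Straight] \<in> colorings n leaves out"
      using exists_recolor_below[OF less.prems(1) b leaves less.prems(2) False] by blast
    let ?c = "a[i := Straight]"
    have step: "recolor_step a ?c"
      using i unfolding recolor_step_def less_color_def by blast
    have "list_all2 (\<le>) ?c b"
      using less.prems(2) i
      unfolding list_all2_conv_all_nth by (auto simp: nth_list_update less_color_def)
    moreover have "num_straight a < num_straight ?c"
      using num_straight_strict_mono[OF recolor_step_imp_le[OF step]] i
      by (metis color.distinct(1) less_color_def nth_list_update_eq)
    moreover have "num_straight ?c \<le> num_straight b"
      using calculation(1) by (rule num_straight_mono)
    ultimately have "(?c, b) \<in> prec_le (colorings n leaves out)"
      using less.hyps c by simp
    then show ?thesis
      using less.prems(1) c step unfolding prec_le_def by (blast intro: converse_rtrancl_into_rtrancl)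
  qed
qed

lemma prec_le_iff_le:
  assumes "a \<in> colorings n leaves out" "b \<in> colorings n leaves out"
    and "\<forall>j<n. leaves j \<noteq> []"
  shows "(a, b) \<in> prec_le (colorings n leaves out) \<longleftrightarrow> list_all2 (\<le>) a b"
  using assms le_imp_prec_le prec_le_imp_le by blast

lemma colorings_has_pointwise_greatest:
  assumes "t \<in> colorings n leaves out"
  obtains tmax where "tmax \<in> colorings n leaves out"
    and "\<And>t. t \<in> colorings n leaves out \<Longrightarrow> list_all2 (\<le>) t tmax"
proof -
  let ?S = "colorings n leaves out"
  have "\<forall>t'. t' \<in> ?S \<longrightarrow> num_straight t' < Suc (length t)"
    using assms num_straight_le_length by (metis le_imp_less_Suc mem_colorings_iff)
  then obtain tmax where tmax: "tmax \<in> ?S" and most: "\<forall>t\<in>?S. num_straight t \<le> num_straight tmax"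
    using ex_has_greatest_nat[of "\<lambda>t. t \<in> ?S", OF assms] by blast
  have "list_all2 (\<le>) t tmax" if t: "t \<in> ?S" for t
  proof -
    let ?m = "map2 max t tmax"
    have len: "length t = length tmax"
      using t tmax by (simp add: mem_colorings_iff)
    have "?m = tmax"
    proof (rule ccontr)
      assume "?m \<noteq> tmax"
      then have "num_straight tmax < num_straight ?m"
        using num_straight_strict_mono list_all2_le_map2_max[OF len] by metis
      then show False
        using most map2_max_mem_colorings[OF t tmax] by fastforce
    qed
    then show ?thesis
      using list_all2_le_map2_max[OF len] by metis
  qed
  with tmax show ?thesis using that by blast
qed

theorem lemma3p7:
  fixes n :: nat and leaves :: "nat \<Rightarrow> color list" and out :: color
  assumes "n \<ge> 1"
    and "\<forall>j<n. length (leaves j) + (if Suc j < n then 1 else 0) \<ge> 2"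
    and "colorings n leaves out \<noteq> {}"
  shows "\<exists>tmax. is_greatest_in (colorings n leaves out) tmax
           \<and> (\<forall>t. is_greatest_in (colorings n leaves out) t \<longrightarrow> t = tmax)
           \<and> (\<forall>t\<in>colorings n leaves out. num_straight t \<le> num_straight tmax)
           \<and> (\<forall>t\<in>colorings n leaves out. num_straight t = num_straight tmax \<longrightarrow> t = tmax)"
proof -
  let ?S = "colorings n leaves out"
  have leaves: "\<forall>j<n. leaves j \<noteq> []"
    using assms(2) by (auto split: if_splits)
  obtain tmax where tmax: "tmax \<in> ?S" and above: "\<And>t. t \<in> ?S \<Longrightarrow> list_all2 (\<le>) t tmax"
    using colorings_has_pointwise_greatest assms(3) by blast
  have greatest: "is_greatest_in ?S tmax"
    using tmax above prec_le_iff_le[OF _ tmax leaves] by (simp add: is_greatest_in_def)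
  show ?thesis
  proof (intro exI conjI ballI allI impI)
    show "is_greatest_in ?S tmax" by (fact greatest)
  next
    fix t assume "is_greatest_in ?S t"
    then have "t \<in> ?S" and "list_all2 (\<le>) tmax t"
      using tmax prec_le_imp_le by (auto simp: is_greatest_in_def)
    then show "t = tmax" using above list_all2_le_antisym by blast
  next
    fix t assume "t \<in> ?S"
    then show "num_straight t \<le> num_straight tmax" using above num_straight_mono by blast
  next
    fix t assume "t \<in> ?S" and "num_straight t = num_straight tmax"
    then show "t = tmax" using above num_straight_strict_mono by fastforce
  qed
qed

end
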